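(* There is a universal constant $C$ such that for any real array $A=(a_{ijk})_{i,j\le n,k\le m}$, any nonempty $T\subset\mathbb{R}^m$ and any $p\ge1$ there exists a decomposition $B^n_2+\sqrt pB^n_1=\bigcup_{i=1}^NU_i$ with $N\le\exp(Cp)$ such that for every $i\le N$, \[ \sup_{x,x'\in U_i}\beta_{A,T}(x-x')\le\frac1{\sqrt p}\,\mathbb{E}\sup_{t\in T}\Big|\sum_{ijk}a_{ijk}g_i\mathcal E_jt_k\Big|\le\frac1{\sqrt p}s_A(T). \]
   Context: $B^n_2,B^n_1$ are the Euclidean and $\ell_1$ unit balls of $\mathbb{R}^n$. $(g_i)$, $(g_{ij})$ are independent standard Gaussian variables; $E_n=(\mathcal E_1,\dots,\mathcal E_n)$ has i.i.d. standard symmetric exponential coordinates, independent of the Gaussians. $\beta_{A,T}(x)=\mathbb{E}\sup_{t\in T}|\sum_{ijk}a_{ijk}g_ix_jt_k|$, and $s_A(T)=\mathbb{E}\sup_{t\in T}\big|\sum_{ijk}a_{ijk}g_{ij}t_k\big|+\mathbb{E}\beta_{A,T}(E_n)$. *)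

theory Defs
  imports "HOL-Probability.Probability"
begin

text \<open>Vectors of R^n are represented as functions nat => real vanishing from index n on.\<close>
definition vecs :: "nat \<Rightarrow> (nat \<Rightarrow> real) set" where
  "vecs n = {x. \<forall>j\<ge>n. x j = 0}"

definition B2 :: "nat \<Rightarrow> (nat \<Rightarrow> real) set" where
  "B2 n = {x \<in> vecs n. (\<Sum>j<n. (x j)\<^sup>2) \<le> 1}"

definition B1 :: "nat \<Rightarrow> (nat \<Rightarrow> real) set" where
  "B1 n = {x \<in> vecs n. (\<Sum>j<n. \<bar>x j\<bar>) \<le> 1}"

definition KB :: "nat \<Rightarrow> real \<Rightarrow> (nat \<Rightarrow> real) set" where
  "KB n p = {(\<lambda>j. y j + sqrt p * z j) | y z. y \<in> B2 n \<and> z \<in> B1 n}"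

definition gauss :: "nat \<Rightarrow> (nat \<Rightarrow> real) measure" where
  "gauss n = PiM {..<n} (\<lambda>_. std_normal_distribution)"

definition gauss2 :: "nat \<Rightarrow> (nat \<times> nat \<Rightarrow> real) measure" where
  "gauss2 n = PiM ({..<n} \<times> {..<n}) (\<lambda>_. std_normal_distribution)"

definition sym_exp_distribution :: "real measure" where
  "sym_exp_distribution = density lborel (\<lambda>x. ennreal (exp (- \<bar>x\<bar>) / 2))"

definition symexp :: "nat \<Rightarrow> (nat \<Rightarrow> real) measure" where
  "symexp n = PiM {..<n} (\<lambda>_. sym_exp_distribution)"

definition beta :: "nat \<Rightarrow> nat \<Rightarrow> (nat \<Rightarrow> nat \<Rightarrow> nat \<Rightarrow> real) \<Rightarrow> (nat \<Rightarrow> real) set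
    \<Rightarrow> (nat \<Rightarrow> real) \<Rightarrow> ennreal" where
  "beta n m a T x = (\<integral>\<^sup>+ g. (SUP t\<in>T. ennreal \<bar>\<Sum>i<n. \<Sum>j<n. \<Sum>k<m. a i j k * g i * x j * t k\<bar>) \<partial>gauss n)"

definition gauss_exp_sup :: "nat \<Rightarrow> nat \<Rightarrow> (nat \<Rightarrow> nat \<Rightarrow> nat \<Rightarrow> real) \<Rightarrow> (nat \<Rightarrow> real) set \<Rightarrow> ennreal" where
  "gauss_exp_sup n m a T = (\<integral>\<^sup>+ ge. (SUP t\<in>T. ennreal \<bar>\<Sum>i<n. \<Sum>j<n. \<Sum>k<m. a i j k * fst ge i * snd ge j * t k\<bar>)
      \<partial>(gauss n \<Otimes>\<^sub>M symexp n))"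

definition sA :: "nat \<Rightarrow> nat \<Rightarrow> (nat \<Rightarrow> nat \<Rightarrow> nat \<Rightarrow> real) \<Rightarrow> (nat \<Rightarrow> real) set \<Rightarrow> ennreal" where
  "sA n m a T = (\<integral>\<^sup>+ G. (SUP t\<in>T. ennreal \<bar>\<Sum>i<n. \<Sum>j<n. \<Sum>k<m. a i j k * G (i, j) * t k\<bar>) \<partial>gauss2 n)
     + (\<integral>\<^sup>+ e. beta n m a T e \<partial>symexp n)"

end

theory Submission
  imports Defs
begin

text \<open>
  Let \<open>\<nu>\<close> be the law of \<open>E\<^sub>n\<close> and \<open>M = E \<beta>(E\<^sub>n)\<close>, which by Fubini is the middle quantity of
  the theorem. By Markov's inequality the symmetric set \<open>K = {z. \<beta>(z) \<le> 4M}\<close> has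
  \<open>\<nu>(K) \<ge> 3/4\<close>. Since \<open>\<nu>\<close> has density proportional to \<open>exp(-\<parallel>z\<parallel>\<^sub>1)\<close>, averaging the density
  ratios for \<open>\<nu>(K + y)\<close> and \<open>\<nu>(K - y) = \<nu>(K + y)\<close> and applying AM-GM gives, for \<open>y = u + v\<close>,
  \<open>\<nu>(K + y) \<ge> exp(-\<parallel>v\<parallel>\<^sub>1 - c) \<nu>(K \<inter> {q \<le> c})\<close>, where \<open>q(z)\<close> sums \<open>|u\<^sub>j|\<close> over the
  coordinates with \<open>|z\<^sub>j| \<le> |u\<^sub>j|\<close>; since \<open>P(|E\<^sub>j| \<le> t) \<le> t\<close>, the mean of \<open>q\<close> is at most
  \<open>\<parallel>u\<parallel>\<^sub>2\<^sup>2\<close>. For \<open>x \<in> B\<^sub>2 + sqrt p B\<^sub>1\<close> the shift \<open>16 sqrt p x\<close> splits with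
  \<open>\<parallel>u\<parallel>\<^sub>2\<^sup>2 \<le> 256p\<close> and \<open>\<parallel>v\<parallel>\<^sub>1 \<le> 16p\<close>, so \<open>\<nu>(K + 16 sqrt p x) \<ge> exp(-1040p)/2\<close>.
  These translates are disjoint for points that are \<open>M/(2 sqrt p)\<close>-separated for the seminorm
  \<open>\<beta>\<close>, so such families have at most \<open>2 exp(1040p)\<close> elements, and the \<open>\<beta>\<close>-balls of radius
  \<open>M/(2 sqrt p)\<close> around a maximal one form the required cover.
\<close>

lemma nn_integral_PiM_coordinatewise:
  fixes \<mu> :: "'a measure" and \<phi> :: "'i \<Rightarrow> 'a \<Rightarrow> 'a" and w :: "'i \<Rightarrow> 'a \<Rightarrow> ennreal"
  assumes "sigma_finite_measure \<mu>" and "finite I"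
    and [measurable]: "\<And>j. \<phi> j \<in> \<mu> \<rightarrow>\<^sub>M \<mu>" "\<And>j. w j \<in> borel_measurable \<mu>"
    and coordinate: "\<And>j f. f \<in> borel_measurable \<mu> \<Longrightarrow> (\<integral>\<^sup>+y. f (\<phi> j y) \<partial>\<mu>) = (\<integral>\<^sup>+y. f y * w j y \<partial>\<mu>)"
    and [measurable]: "h \<in> borel_measurable (PiM I (\<lambda>_. \<mu>))"
  shows "(\<integral>\<^sup>+z. h (\<lambda>j\<in>I. \<phi> j (z j)) \<partial>PiM I (\<lambda>_. \<mu>)) = (\<integral>\<^sup>+z. h z * (\<Prod>j\<in>I. w j (z j)) \<partial>PiM I (\<lambda>_. \<mu>))"
  using \<open>finite I\<close> \<open>h \<in> _\<close>
proof (induction I arbitrary: h rule: finite_induct)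
  case empty
  then show ?case by (simp add: PiM_empty nn_integral_count_space_finite)
next
  case (insert i I)
  interpret product_sigma_finite "\<lambda>_. \<mu>"
    using assms(1) unfolding product_sigma_finite_def by simp
  note [measurable] = insert.prems
  let ?\<Phi> = "\<lambda>z. \<lambda>j\<in>I. \<phi> j (z j)"
  define G where "G v = (\<integral>\<^sup>+y. h (v(i := y)) * w i y \<partial>\<mu>)" for v
  have G_measurable[measurable]: "G \<in> borel_measurable (PiM I (\<lambda>_. \<mu>))"
    unfolding G_def by measurable
  have [measurable]: "(\<lambda>y. v(i := y)) \<in> \<mu> \<rightarrow>\<^sub>M PiM (insert i I) (\<lambda>_. \<mu>)"
    if "v \<in> space (PiM I (\<lambda>_. \<mu>))" for v
    using measurable_Pair1'[OF that, THEN measurable_compose, OF measurable_add_dim] by simp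
  have "(\<integral>\<^sup>+z. h (\<lambda>j\<in>insert i I. \<phi> j (z j)) \<partial>PiM (insert i I) (\<lambda>_. \<mu>))
      = (\<integral>\<^sup>+z. (\<integral>\<^sup>+y. h ((?\<Phi> z)(i := \<phi> i y)) \<partial>\<mu>) \<partial>PiM I (\<lambda>_. \<mu>))"
  proof (subst product_nn_integral_insert)
    have "(\<lambda>j\<in>insert i I. \<phi> j ((z(i := y)) j)) = (?\<Phi> z)(i := \<phi> i y)" for z y
      using insert.hyps by (auto simp: fun_eq_iff)
    then show "(\<integral>\<^sup>+z. (\<integral>\<^sup>+y. h (\<lambda>j\<in>insert i I. \<phi> j ((z(i := y)) j)) \<partial>\<mu>) \<partial>PiM I (\<lambda>_. \<mu>))
      = (\<integral>\<^sup>+z. (\<integral>\<^sup>+y. h ((?\<Phi> z)(i := \<phi> i y)) \<partial>\<mu>) \<partial>PiM I (\<lambda>_. \<mu>))"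
      by simp
  qed (use insert.hyps in auto)
  also have "\<dots> = (\<integral>\<^sup>+z. G (?\<Phi> z) \<partial>PiM I (\<lambda>_. \<mu>))"
  proof (rule nn_integral_cong)
    fix z assume "z \<in> space (PiM I (\<lambda>_. \<mu>))"
    then have "?\<Phi> z \<in> space (PiM I (\<lambda>_. \<mu>))"
      by (rule measurable_space[rotated]) measurable
    then have "(\<lambda>y. h ((?\<Phi> z)(i := y))) \<in> borel_measurable \<mu>"
      by measurable
    then show "(\<integral>\<^sup>+y. h ((?\<Phi> z)(i := \<phi> i y)) \<partial>\<mu>) = G (?\<Phi> z)"
      unfolding G_def by (rule coordinate)
  qed
  also have "\<dots> = (\<integral>\<^sup>+z. G z * (\<Prod>j\<in>I. w j (z j)) \<partial>PiM I (\<lambda>_. \<mu>))"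
    by (rule insert.IH) (rule G_measurable)
  also have "\<dots> = (\<integral>\<^sup>+z. (\<integral>\<^sup>+y. h (z(i := y)) * (\<Prod>j\<in>insert i I. w j ((z(i := y)) j)) \<partial>\<mu>) \<partial>PiM I (\<lambda>_. \<mu>))"
  proof (rule nn_integral_cong)
    fix z assume z: "z \<in> space (PiM I (\<lambda>_. \<mu>))"
    have "(\<Prod>j\<in>insert i I. w j ((z(i := y)) j)) = w i y * (\<Prod>j\<in>I. w j (z j))" for y
    proof -
      have "(\<Prod>j\<in>I. w j ((z(i := y)) j)) = (\<Prod>j\<in>I. w j (z j))"
        using insert.hyps by (intro prod.cong) auto
      then show ?thesis using insert.hyps by simp
    qed
    moreover have "(\<lambda>y. h (z(i := y)) * w i y) \<in> borel_measurable \<mu>"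
      using z by measurable
    ultimately show "G z * (\<Prod>j\<in>I. w j (z j)) = (\<integral>\<^sup>+y. h (z(i := y)) * (\<Prod>j\<in>insert i I. w j ((z(i := y)) j)) \<partial>\<mu>)"
      unfolding G_def by (simp add: nn_integral_multc[symmetric] mult.assoc)
  qed
  also have "\<dots> = (\<integral>\<^sup>+z. h z * (\<Prod>j\<in>insert i I. w j (z j)) \<partial>PiM (insert i I) (\<lambda>_. \<mu>))"
    by (subst product_nn_integral_insert) (auto simp: insert.hyps)
  finally show ?case .
qed

lemma emeasure_preimage_eq_nn_integral:
  assumes [measurable]: "f \<in> M \<rightarrow>\<^sub>M N" "A \<in> sets N"
  shows "emeasure M {x \<in> space M. f x \<in> A} = (\<integral>\<^sup>+x. indicator A (f x) \<partial>M)"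
proof -
  have "{x \<in> space M. f x \<in> A} \<in> sets M"
    by measurable
  moreover have "(\<integral>\<^sup>+x. indicator A (f x) \<partial>M) = (\<integral>\<^sup>+x. indicator {x \<in> space M. f x \<in> A} x \<partial>M)"
    by (intro nn_integral_cong) (auto split: split_indicator)
  ultimately show ?thesis
    by simp
qed

lemma (in prob_space) prob_gt_mult_nn_integral_le:
  assumes [measurable]: "f \<in> borel_measurable M" and "integral\<^sup>N M f \<noteq> \<infinity>" and "0 < c"
  shows "prob {x \<in> space M. ennreal c * integral\<^sup>N M f < f x} \<le> 1 / c"
proof (cases "integral\<^sup>N M f = 0")
  case True
  then have "AE x in M. f x = 0"
    by (simp add: nn_integral_0_iff_AE)
  then have "prob {x \<in> space M. ennreal c * integral\<^sup>N M f < f x} = 0"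
    using True by (intro prob_eq_0_AE) auto
  then show ?thesis
    using \<open>0 < c\<close> by simp
next
  case False
  let ?S = "{x \<in> space M. ennreal c * integral\<^sup>N M f < f x}"
  obtain r where r: "integral\<^sup>N M f = ennreal r" "0 < r"
    using False assms(2) by (cases "integral\<^sup>N M f") (auto simp: less_le)
  have "ennreal (c * r) * emeasure M ?S = (\<integral>\<^sup>+x. ennreal (c * r) * indicator ?S x \<partial>M)"
    by (rule nn_integral_cmult_indicator[symmetric]) measurable
  also have "\<dots> \<le> ennreal r"
    unfolding r(1)[symmetric] using \<open>0 < c\<close> r
    by (intro nn_integral_mono) (auto simp: ennreal_mult split: split_indicator)
  finally have "c * r * prob ?S \<le> r"
    using \<open>0 < c\<close> r by (simp add: emeasure_eq_measure flip: ennreal_mult)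
  then show ?thesis
    using \<open>0 < c\<close> r by (simp add: field_simps)
qed

lemma (in prob_space) card_mult_le_one_of_disjoint_events:
  assumes "finite P" "disjoint_family_on A P" "\<And>x. x \<in> P \<Longrightarrow> A x \<in> events"
    and "\<And>x. x \<in> P \<Longrightarrow> \<delta> \<le> prob (A x)"
  shows "real (card P) * \<delta> \<le> 1"
proof -
  have "real (card P) * \<delta> \<le> (\<Sum>x\<in>P. prob (A x))"
    using sum_mono[of P "\<lambda>_. \<delta>"] assms(4) by simp
  also have "\<dots> = prob (\<Union>x\<in>P. A x)"
    using assms by (intro finite_measure_finite_Union[symmetric]) auto
  also have "\<dots> \<le> 1"
    by simp
  finally show ?thesis .
qed

definition separated :: "('a \<Rightarrow> 'a \<Rightarrow> ennreal) \<Rightarrow> ennreal \<Rightarrow> 'a set \<Rightarrow> bool" where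
  "separated d r P \<longleftrightarrow> (\<forall>x\<in>P. \<forall>y\<in>P. x \<noteq> y \<longrightarrow> r < d x y)"

lemma ex_maximal_separated_subset:
  assumes "\<And>P. finite P \<Longrightarrow> P \<subseteq> S \<Longrightarrow> separated d r P \<Longrightarrow> real (card P) \<le> B"
  shows "\<exists>P. finite P \<and> P \<subseteq> S \<and> separated d r P \<and>
    (\<forall>P'. finite P' \<and> P' \<subseteq> S \<and> separated d r P' \<longrightarrow> card P' \<le> card P)"
proof -
  define cards where "cards = {card P | P. finite P \<and> P \<subseteq> S \<and> separated d r P}"
  have cards_iff: "k \<in> cards \<longleftrightarrow> (\<exists>P. k = card P \<and> finite P \<and> P \<subseteq> S \<and> separated d r P)" for k
    unfolding cards_def by blast
  have "cards \<subseteq> {..nat \<lfloor>B\<rfloor>}"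
    using assms unfolding cards_def by (auto intro: le_nat_floor)
  then have "finite cards"
    by (rule finite_subset) simp
  moreover have "0 \<in> cards"
    unfolding cards_def separated_def by force
  ultimately have "Max cards \<in> cards"
    by (intro Max_in) auto
  then obtain P where "finite P" "P \<subseteq> S" "separated d r P" and "card P = Max cards"
    using cards_iff[of "Max cards"] by metis
  moreover have "card P' \<le> Max cards" if "finite P'" "P' \<subseteq> S" "separated d r P'" for P'
    using \<open>finite cards\<close> cards_iff[of "card P'"] that by auto
  ultimately show ?thesis
    by metis
qed

lemma cover_of_bounded_packing:
  fixes d :: "'a \<Rightarrow> 'a \<Rightarrow> ennreal"
  assumes zero: "\<And>x. d x x = 0" and sym: "\<And>x y. d x y = d y x"
    and triangle: "\<And>x y z. d x z \<le> d x y + d y z"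
    and packing: "\<And>P. finite P \<Longrightarrow> P \<subseteq> S \<Longrightarrow> separated d r P \<Longrightarrow> real (card P) \<le> B"
  shows "\<exists>N U. real N \<le> B \<and> S = (\<Union>i\<in>{1..N}. U i) \<and> (\<forall>i\<in>{1..N}. \<forall>x\<in>U i. \<forall>y\<in>U i. d x y \<le> 2 * r)"
proof -
  from ex_maximal_separated_subset[of S d r B, OF packing]
  obtain P where P: "finite P" "P \<subseteq> S" "separated d r P"
    and maximal: "\<And>P'. finite P' \<Longrightarrow> P' \<subseteq> S \<Longrightarrow> separated d r P' \<Longrightarrow> card P' \<le> card P"
    by blast
  have near: "\<exists>x\<in>P. d w x \<le> r" if "w \<in> S" for w
  proof (rule ccontr)
    assume "\<not> ?thesis"
    then have far: "r < d w x" if "x \<in> P" for x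
      using that by (simp add: not_le)
    have far': "r < d x w" if "x \<in> P" for x
      using far[OF that] by (simp only: sym)
    have "w \<notin> P"
    proof
      assume "w \<in> P"
      then have "r < d w w"
        by (rule far)
      then show False
        using zero by simp
    qed
    moreover have "separated d r (insert w P)"
      using P(3) far far' unfolding separated_def by blast
    ultimately show False
      using maximal[of "insert w P"] P \<open>w \<in> S\<close> by simp
  qed
  obtain c where c: "bij_betw c {1..card P} P"
    using ex_bij_betw_nat_finite_1[OF P(1)] by blast
  define U where "U i = {w \<in> S. d w (c i) \<le> r}" for i
  have "S \<subseteq> (\<Union>i\<in>{1..card P}. U i)"
  proof
    fix w assume "w \<in> S"
    then obtain x where "x \<in> P" "d w x \<le> r"
      using near by blast
    moreover from \<open>x \<in> P\<close> obtain i where "i \<in> {1..card P}" "x = c i"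
      using c unfolding bij_betw_def by blast
    ultimately show "w \<in> (\<Union>i\<in>{1..card P}. U i)"
      using \<open>w \<in> S\<close> unfolding U_def by blast
  qed
  then have "S = (\<Union>i\<in>{1..card P}. U i)"
    unfolding U_def by blast
  moreover have "d x y \<le> 2 * r" if "x \<in> U i" "y \<in> U i" for i x y
  proof -
    have "d x y \<le> d x (c i) + d (c i) y"
      by (rule triangle)
    also have "\<dots> \<le> r + r"
      using that sym unfolding U_def by (intro add_mono) auto
    finally show ?thesis
      by (simp add: mult_2)
  qed
  ultimately show ?thesis
    using packing[OF P] by blast
qed

lemma two_exp_midpoint_le: "2 * exp ((a + b) / 2) \<le> exp a + exp (b::real)"
proof -
  have "0 \<le> (exp (a/2) - exp (b/2))\<^sup>2" by simp
  also have "\<dots> = exp a + exp b - 2 * exp ((a + b) / 2)"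
    by (simp add: power2_eq_square algebra_simps mult_exp_exp flip: exp_add)
  finally show ?thesis by simp
qed

lemma two_exp_le_exp_add:
  assumes "1 \<le> p"
  shows "2 * exp q \<le> exp (p + q :: real)"
proof -
  have "2 \<le> exp p"
    using exp_ge_add_one_self[of p] assms by linarith
  then show ?thesis
    by (simp add: exp_add)
qed

section \<open>The symmetric exponential distribution\<close>

definition sym_exp_density :: "real \<Rightarrow> real" where
  "sym_exp_density x = exp (- \<bar>x\<bar>) / 2"

lemma borel_measurable_sym_exp_density[measurable]: "sym_exp_density \<in> borel_measurable borel"
  unfolding sym_exp_density_def by measurable

lemma sym_exp_density_nonneg: "0 \<le> sym_exp_density x"
  by (simp add: sym_exp_density_def)

lemma sym_exp_distribution_density: "sym_exp_distribution = density lborel (\<lambda>x. ennreal (sym_exp_density x))"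
  unfolding sym_exp_distribution_def sym_exp_density_def ..

lemma sets_sym_exp_distribution[simp, measurable_cong]: "sets sym_exp_distribution = sets borel"
  by (simp add: sym_exp_distribution_def)

lemma space_sym_exp_distribution[simp]: "space sym_exp_distribution = UNIV"
  by (simp add: sym_exp_distribution_def)

lemma nn_integral_sym_exp_distribution:
  fixes f :: "real \<Rightarrow> ennreal"
  assumes [measurable]: "f \<in> borel_measurable borel"
  shows "(\<integral>\<^sup>+y. f y \<partial>sym_exp_distribution) = (\<integral>\<^sup>+y. sym_exp_density y * f y \<partial>lborel)"
  unfolding sym_exp_distribution_density by (subst nn_integral_density) (auto simp: sym_exp_density_def)

lemma prob_space_sym_exp_distribution: "prob_space sym_exp_distribution"
proof
  let ?e = "\<lambda>x. ennreal (exponential_density 1 x)"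
  have e_integral: "(\<integral>\<^sup>+x. ?e x \<partial>lborel) = 1"
    using prob_space.emeasure_space_1[OF prob_space_exponential_density[of 1]]
    by (simp add: emeasure_density)
  have "AE x in lborel. ennreal (sym_exp_density x) = (?e x + ?e (- x)) / 2"
    using AE_lborel_singleton[of 0]
    by eventually_elim
       (auto simp: sym_exp_density_def exponential_density_def ennreal_divide_numeral not_less)
  then have "emeasure sym_exp_distribution (space sym_exp_distribution) = (\<integral>\<^sup>+x. (?e x + ?e (- x)) / 2 \<partial>lborel)"
    by (simp add: sym_exp_distribution_density emeasure_density cong: nn_integral_cong_AE)
  also have "\<dots> = ((\<integral>\<^sup>+x. ?e x \<partial>lborel) + (\<integral>\<^sup>+x. ?e (- x) \<partial>lborel)) / 2"
    by (simp add: divide_ennreal_def nn_integral_multc nn_integral_add)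
  also have "(\<integral>\<^sup>+x. ?e (- x) \<partial>lborel) = (\<integral>\<^sup>+x. ?e x \<partial>lborel)"
    using nn_integral_real_affine[of ?e "-1" 0] by simp
  finally show "emeasure sym_exp_distribution (space sym_exp_distribution) = 1"
    using e_integral by simp
qed

lemma nn_integral_sym_exp_shift:
  fixes f :: "real \<Rightarrow> ennreal"
  assumes [measurable]: "f \<in> borel_measurable borel"
  shows "(\<integral>\<^sup>+y. f (y - c) \<partial>sym_exp_distribution)
       = (\<integral>\<^sup>+y. f y * ennreal (exp (\<bar>y\<bar> - \<bar>y + c\<bar>)) \<partial>sym_exp_distribution)"
proof -
  have density_shift: "sym_exp_density (c + y) = sym_exp_density y * exp (\<bar>y\<bar> - \<bar>y + c\<bar>)" for y
    by (simp add: sym_exp_density_def mult_exp_exp add.commute)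
  have "(\<integral>\<^sup>+y. f (y - c) \<partial>sym_exp_distribution) = (\<integral>\<^sup>+y. sym_exp_density y * f (y - c) \<partial>lborel)"
    by (rule nn_integral_sym_exp_distribution) measurable
  also have "\<dots> = (\<integral>\<^sup>+y. sym_exp_density (c + y) * f y \<partial>lborel)"
    by (subst nn_integral_real_affine[where c=1 and t=c]) auto
  also have "\<dots> = (\<integral>\<^sup>+y. sym_exp_density y * (f y * ennreal (exp (\<bar>y\<bar> - \<bar>y + c\<bar>))) \<partial>lborel)"
    by (intro nn_integral_cong) (simp add: density_shift ennreal_mult sym_exp_density_nonneg mult_ac)
  also have "\<dots> = (\<integral>\<^sup>+y. f y * ennreal (exp (\<bar>y\<bar> - \<bar>y + c\<bar>)) \<partial>sym_exp_distribution)"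
    by (rule nn_integral_sym_exp_distribution[symmetric]) measurable
  finally show ?thesis .
qed

lemma nn_integral_sym_exp_reflect:
  fixes f :: "real \<Rightarrow> ennreal"
  assumes [measurable]: "f \<in> borel_measurable borel"
  shows "(\<integral>\<^sup>+y. f (- y) \<partial>sym_exp_distribution) = (\<integral>\<^sup>+y. f y \<partial>sym_exp_distribution)"
proof -
  have "(\<integral>\<^sup>+y. sym_exp_density y * f (- y) \<partial>lborel) = (\<integral>\<^sup>+y. sym_exp_density y * f y \<partial>lborel)"
    by (subst nn_integral_real_affine[where c="-1" and t=0]) (auto simp: sym_exp_density_def)
  then show ?thesis
    by (simp add: nn_integral_sym_exp_distribution)
qed

lemma emeasure_sym_exp_abs_le:
  assumes "0 \<le> a"
  shows "emeasure sym_exp_distribution {y. \<bar>y\<bar> \<le> a} \<le> ennreal a"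
proof -
  have "emeasure sym_exp_distribution {y. \<bar>y\<bar> \<le> a} = (\<integral>\<^sup>+y. ennreal (sym_exp_density y) * indicator {-a..a} y \<partial>lborel)"
    unfolding sym_exp_distribution_density
    by (subst emeasure_density) (auto intro!: nn_integral_cong split: split_indicator)
  also have "\<dots> \<le> (\<integral>\<^sup>+y. ennreal (1/2) * indicator {-a..a} y \<partial>lborel)"
    by (intro nn_integral_mono mult_right_mono ennreal_leI) (auto simp: sym_exp_density_def)
  also have "\<dots> = ennreal (1/2) * ennreal (2 * a)"
    using assms by (simp add: nn_integral_cmult)
  also have "\<dots> = ennreal a"
    using assms by (subst ennreal_mult[symmetric]) auto
  finally show ?thesis .
qed

lemma sets_symexp[measurable_cong]: "sets (symexp n) = sets (PiM {..<n} (\<lambda>_. borel))"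
  unfolding symexp_def by (intro sets_PiM_cong) auto

lemma space_symexp: "space (symexp n) = PiE {..<n} (\<lambda>_. UNIV)"
  by (simp add: symexp_def space_PiM)

lemma prob_space_symexp: "prob_space (symexp n)"
  unfolding symexp_def by (rule prob_space_PiM) (rule prob_space_sym_exp_distribution)

lemma nn_integral_symexp_shift:
  assumes "h \<in> borel_measurable (symexp n)"
  shows "(\<integral>\<^sup>+z. h (\<lambda>j\<in>{..<n}. z j - y j) \<partial>symexp n)
       = (\<integral>\<^sup>+z. h z * ennreal (exp (\<Sum>j<n. \<bar>z j\<bar> - \<bar>z j + y j\<bar>)) \<partial>symexp n)"
proof -
  have "(\<integral>\<^sup>+z. h (\<lambda>j\<in>{..<n}. z j - y j) \<partial>symexp n)
       = (\<integral>\<^sup>+z. h z * (\<Prod>j<n. ennreal (exp (\<bar>z j\<bar> - \<bar>z j + y j\<bar>))) \<partial>symexp n)"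
    unfolding symexp_def
    by (rule nn_integral_PiM_coordinatewise)
       (use assms in \<open>auto simp: prob_space_sym_exp_distribution prob_space_imp_sigma_finite
          nn_integral_sym_exp_shift symexp_def\<close>)
  then show ?thesis
    by (simp add: prod_ennreal exp_sum)
qed

lemma nn_integral_symexp_reflect:
  assumes "h \<in> borel_measurable (symexp n)"
  shows "(\<integral>\<^sup>+z. h (\<lambda>j\<in>{..<n}. - z j) \<partial>symexp n) = (\<integral>\<^sup>+z. h z \<partial>symexp n)"
proof -
  have "(\<integral>\<^sup>+z. h (\<lambda>j\<in>{..<n}. - z j) \<partial>symexp n) = (\<integral>\<^sup>+z. h z * (\<Prod>j<n. 1) \<partial>symexp n)"
    unfolding symexp_def
    by (rule nn_integral_PiM_coordinatewise)
       (use assms in \<open>auto simp: prob_space_sym_exp_distribution prob_space_imp_sigma_finite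
          nn_integral_sym_exp_reflect symexp_def\<close>)
  then show ?thesis
    by simp
qed

lemma emeasure_symexp_coordinate:
  assumes "j < n" and "A \<in> sets borel"
  shows "emeasure (symexp n) {z \<in> space (symexp n). z j \<in> A} = emeasure sym_exp_distribution A"
proof -
  have "distr (symexp n) sym_exp_distribution (\<lambda>z. z j) = sym_exp_distribution"
    unfolding symexp_def using assms prob_space_sym_exp_distribution
    by (intro distr_PiM_component) auto
  then have "emeasure sym_exp_distribution A = emeasure (symexp n) ((\<lambda>z. z j) -` A \<inter> space (symexp n))"
    using assms by (metis emeasure_distr measurable_component_singleton lessThan_iff
        sets_sym_exp_distribution symexp_def)
  then show ?thesis
    by (simp add: vimage_def Int_def conj_commute)
qed

section \<open>Translates of symmetric sets under the exponential measure\<close>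

definition small_coord_mass :: "nat \<Rightarrow> (nat \<Rightarrow> real) \<Rightarrow> (nat \<Rightarrow> real) \<Rightarrow> real" where
  "small_coord_mass n u z = (\<Sum>j<n. if \<bar>z j\<bar> \<le> \<bar>u j\<bar> then \<bar>u j\<bar> else 0)"

lemma borel_measurable_small_coord_mass[measurable]:
  "small_coord_mass n u \<in> borel_measurable (symexp n)"
  unfolding small_coord_mass_def by measurable

lemma nn_integral_small_coord_mass:
  "(\<integral>\<^sup>+z. small_coord_mass n u z \<partial>symexp n) \<le> ennreal (\<Sum>j<n. (u j)\<^sup>2)"
proof -
  let ?S = "\<lambda>j. {z \<in> space (symexp n). \<bar>z j\<bar> \<le> \<bar>u j\<bar>}"
  have "(\<Sum>j<n. ennreal \<bar>u j\<bar> * indicator (?S j) z) = ennreal (small_coord_mass n u z)"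
    if "z \<in> space (symexp n)" for z
  proof -
    have "(\<Sum>j<n. ennreal \<bar>u j\<bar> * indicator (?S j) z) = (\<Sum>j<n. ennreal (if \<bar>z j\<bar> \<le> \<bar>u j\<bar> then \<bar>u j\<bar> else 0))"
      using that by (intro sum.cong) (auto split: split_indicator)
    also have "\<dots> = ennreal (small_coord_mass n u z)"
      unfolding small_coord_mass_def by (rule sum_ennreal) auto
    finally show ?thesis .
  qed
  then have "(\<integral>\<^sup>+z. small_coord_mass n u z \<partial>symexp n) = (\<integral>\<^sup>+z. (\<Sum>j<n. ennreal \<bar>u j\<bar> * indicator (?S j) z) \<partial>symexp n)"
    by (intro nn_integral_cong) simp
  also have "\<dots> = (\<Sum>j<n. ennreal \<bar>u j\<bar> * emeasure (symexp n) (?S j))"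
    by (subst nn_integral_sum) (auto simp: nn_integral_cmult)
  also have "\<dots> = (\<Sum>j<n. ennreal \<bar>u j\<bar> * emeasure sym_exp_distribution {y. \<bar>y\<bar> \<le> \<bar>u j\<bar>})"
    by (intro sum.cong refl arg_cong2[where f="(*)"] emeasure_symexp_coordinate[where A="{y. \<bar>y\<bar> \<le> _}", simplified]) auto
  also have "\<dots> \<le> (\<Sum>j<n. ennreal \<bar>u j\<bar> * ennreal \<bar>u j\<bar>)"
    by (intro sum_mono mult_left_mono emeasure_sym_exp_abs_le) auto
  also have "\<dots> = ennreal (\<Sum>j<n. (u j)\<^sup>2)"
    by (simp add: power2_eq_square sum_nonneg flip: ennreal_mult sum_ennreal)
  finally show ?thesis .
qed

lemma exp_shift_weights_ge:
  fixes y u v z :: "nat \<Rightarrow> real"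
  assumes yuv: "\<And>j. j < n \<Longrightarrow> y j = u j + v j"
  shows "2 * exp (- ((\<Sum>j<n. \<bar>v j\<bar>) + small_coord_mass n u z))
    \<le> exp (\<Sum>j<n. \<bar>z j\<bar> - \<bar>z j + y j\<bar>) + exp (\<Sum>j<n. \<bar>z j\<bar> - \<bar>z j - y j\<bar>)"
proof -
  have coordinate: "- (\<bar>v j\<bar> + (if \<bar>z j\<bar> \<le> \<bar>u j\<bar> then \<bar>u j\<bar> else 0))
      \<le> ((\<bar>z j\<bar> - \<bar>z j + y j\<bar>) + (\<bar>z j\<bar> - \<bar>z j - y j\<bar>)) / 2" if "j < n" for j
  proof (cases "\<bar>z j\<bar> \<le> \<bar>u j\<bar>")
    case True
    then show ?thesis
      using yuv[OF that] abs_triangle_ineq[of "z j" "u j + v j"] abs_triangle_ineq4[of "z j" "u j + v j"]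
        abs_triangle_ineq[of "u j" "v j"] by simp
  next
    case False
    then have "\<bar>z j + y j\<bar> + \<bar>z j - y j\<bar> \<le> 2 * \<bar>z j\<bar> + 2 * \<bar>v j\<bar>"
      using yuv[OF that] by (simp add: abs_if split: if_splits)
    then show ?thesis using False by simp
  qed
  have "- ((\<Sum>j<n. \<bar>v j\<bar>) + small_coord_mass n u z)
      = (\<Sum>j<n. - (\<bar>v j\<bar> + (if \<bar>z j\<bar> \<le> \<bar>u j\<bar> then \<bar>u j\<bar> else 0)))"
    by (simp add: small_coord_mass_def sum_subtractf sum_negf)
  also have "\<dots> \<le> (\<Sum>j<n. ((\<bar>z j\<bar> - \<bar>z j + y j\<bar>) + (\<bar>z j\<bar> - \<bar>z j - y j\<bar>)) / 2)"
    by (intro sum_mono coordinate) simp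
  also have "\<dots> = ((\<Sum>j<n. \<bar>z j\<bar> - \<bar>z j + y j\<bar>) + (\<Sum>j<n. \<bar>z j\<bar> - \<bar>z j - y j\<bar>)) / 2"
    by (simp only: sum.distrib[symmetric] sum_divide_distrib[symmetric])
  finally show ?thesis
    by (meson exp_le_cancel_iff mult_left_mono order_trans two_exp_midpoint_le zero_le_numeral)
qed

lemma emeasure_symexp_shift:
  assumes "K \<in> sets (symexp n)"
  shows "emeasure (symexp n) {z \<in> space (symexp n). (\<lambda>j\<in>{..<n}. z j - y j) \<in> K}
       = (\<integral>\<^sup>+z. indicator K z * ennreal (exp (\<Sum>j<n. \<bar>z j\<bar> - \<bar>z j + y j\<bar>)) \<partial>symexp n)"
proof -
  note [measurable] = assms[unfolded sets_symexp]
  have "emeasure (symexp n) {z \<in> space (symexp n). (\<lambda>j\<in>{..<n}. z j - y j) \<in> K}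
      = (\<integral>\<^sup>+z. indicator K (\<lambda>j\<in>{..<n}. z j - y j) \<partial>symexp n)"
    by (rule emeasure_preimage_eq_nn_integral) measurable
  then show ?thesis
    by (simp add: nn_integral_symexp_shift)
qed

lemma emeasure_symexp_shift_reflect:
  assumes "K \<in> sets (symexp n)"
    and symmetric: "\<And>z. z \<in> K \<Longrightarrow> (\<lambda>j\<in>{..<n}. - z j) \<in> K"
  shows "emeasure (symexp n) {z \<in> space (symexp n). (\<lambda>j\<in>{..<n}. z j + y j) \<in> K}
       = emeasure (symexp n) {z \<in> space (symexp n). (\<lambda>j\<in>{..<n}. z j - y j) \<in> K}"
proof -
  note [measurable] = assms(1)[unfolded sets_symexp]
  have neg_mem: "(\<lambda>j\<in>{..<n}. - z j - y j) \<in> K \<longleftrightarrow> (\<lambda>j\<in>{..<n}. z j + y j) \<in> K" for z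
  proof -
    have "(\<lambda>j\<in>{..<n}. - (\<lambda>j\<in>{..<n}. - z j - y j) j) = (\<lambda>j\<in>{..<n}. z j + y j)"
      and "(\<lambda>j\<in>{..<n}. - (\<lambda>j\<in>{..<n}. z j + y j) j) = (\<lambda>j\<in>{..<n}. - z j - y j)"
      by auto
    then show ?thesis
      using symmetric by metis
  qed
  have "emeasure (symexp n) {z \<in> space (symexp n). (\<lambda>j\<in>{..<n}. z j - y j) \<in> K}
      = (\<integral>\<^sup>+z. indicator K (\<lambda>j\<in>{..<n}. z j - y j) \<partial>symexp n)"
    by (rule emeasure_preimage_eq_nn_integral) measurable
  also have "\<dots> = (\<integral>\<^sup>+z. indicator K (\<lambda>j\<in>{..<n}. - z j - y j) \<partial>symexp n)"
  proof -
    have "(\<lambda>z. indicator K (\<lambda>j\<in>{..<n}. z j - y j)) \<in> borel_measurable (symexp n)"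
      by measurable
    from nn_integral_symexp_reflect[OF this] show ?thesis
      by (simp add: restrict_def cong: if_cong)
  qed
  also have "\<dots> = (\<integral>\<^sup>+z. indicator K (\<lambda>j\<in>{..<n}. z j + y j) \<partial>symexp n)"
    by (intro nn_integral_cong) (simp add: indicator_def neg_mem)
  also have "\<dots> = emeasure (symexp n) {z \<in> space (symexp n). (\<lambda>j\<in>{..<n}. z j + y j) \<in> K}"
    by (rule emeasure_preimage_eq_nn_integral[symmetric]) measurable
  finally show ?thesis ..
qed

lemma emeasure_symexp_shift_ge:
  assumes "K \<in> sets (symexp n)"
    and symmetric: "\<And>z. z \<in> K \<Longrightarrow> (\<lambda>j\<in>{..<n}. - z j) \<in> K"
    and yuv: "\<And>j. j < n \<Longrightarrow> y j = u j + v j"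
  shows "ennreal (exp (- ((\<Sum>j<n. \<bar>v j\<bar>) + c)))
           * emeasure (symexp n) (K \<inter> {z \<in> space (symexp n). small_coord_mass n u z \<le> c})
         \<le> emeasure (symexp n) {z \<in> space (symexp n). (\<lambda>j\<in>{..<n}. z j - y j) \<in> K}"
proof -
  note [measurable] = assms(1)[unfolded sets_symexp]
  define \<delta> where "\<delta> = exp (- ((\<Sum>j<n. \<bar>v j\<bar>) + c))"
  define W where "W s z = ennreal (exp (\<Sum>j<n. \<bar>z j\<bar> - \<bar>z j + s j\<bar>))" for s z :: "nat \<Rightarrow> real"
  let ?L = "{z \<in> space (symexp n). small_coord_mass n u z \<le> c}"
  let ?A = "emeasure (symexp n) {z \<in> space (symexp n). (\<lambda>j\<in>{..<n}. z j - y j) \<in> K}"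
  have [measurable]: "W s \<in> borel_measurable (symexp n)" for s
    unfolding W_def by measurable
  have weights: "2 * ennreal \<delta> * indicator (K \<inter> ?L) z \<le> indicator K z * (W y z + W (\<lambda>j. - y j) z)" for z
  proof (cases "z \<in> K \<inter> ?L")
    case True
    then have "2 * \<delta> \<le> 2 * exp (- ((\<Sum>j<n. \<bar>v j\<bar>) + small_coord_mass n u z))"
      by (simp add: \<delta>_def)
    also have "\<dots> \<le> exp (\<Sum>j<n. \<bar>z j\<bar> - \<bar>z j + y j\<bar>) + exp (\<Sum>j<n. \<bar>z j\<bar> - \<bar>z j - y j\<bar>)"
      by (rule exp_shift_weights_ge) (rule yuv)
    finally have "ennreal (2 * \<delta>) \<le> W y z + W (\<lambda>j. - y j) z"
      unfolding W_def using ennreal_leI by fastforce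
    then show ?thesis
      using True by (simp add: ennreal_mult \<delta>_def)
  qed simp
  have "2 * (ennreal \<delta> * emeasure (symexp n) (K \<inter> ?L)) = (\<integral>\<^sup>+z. 2 * ennreal \<delta> * indicator (K \<inter> ?L) z \<partial>symexp n)"
    by (subst nn_integral_cmult) (auto simp: mult.assoc)
  also have "\<dots> \<le> (\<integral>\<^sup>+z. indicator K z * (W y z + W (\<lambda>j. - y j) z) \<partial>symexp n)"
    by (intro nn_integral_mono weights)
  also have "\<dots> = (\<integral>\<^sup>+z. indicator K z * W y z \<partial>symexp n) + (\<integral>\<^sup>+z. indicator K z * W (\<lambda>j. - y j) z \<partial>symexp n)"
    by (subst nn_integral_add[symmetric]) (auto simp: distrib_left)
  also have "\<dots> = ?A + ?A"
    using emeasure_symexp_shift[OF assms(1), of y] emeasure_symexp_shift[OF assms(1), of "\<lambda>j. - y j"]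
      emeasure_symexp_shift_reflect[OF assms(1) symmetric, of y]
    by (simp add: W_def)
  finally have "2 * (ennreal \<delta> * emeasure (symexp n) (K \<inter> ?L)) \<le> 2 * ?A"
    by (simp add: mult_2)
  then show ?thesis
    unfolding \<delta>_def by (subst (asm) ennreal_mult_le_mult_iff) auto
qed

lemma measure_symexp_shift_ge:
  assumes "K \<in> sets (symexp n)"
    and symmetric: "\<And>z. z \<in> K \<Longrightarrow> (\<lambda>j\<in>{..<n}. - z j) \<in> K"
    and yuv: "\<And>j. j < n \<Longrightarrow> y j = u j + v j"
  shows "exp (- ((\<Sum>j<n. \<bar>v j\<bar>) + 4 * (\<Sum>j<n. (u j)\<^sup>2))) * (measure (symexp n) K - 1/4)
         \<le> measure (symexp n) {z \<in> space (symexp n). (\<lambda>j\<in>{..<n}. z j - y j) \<in> K}"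
proof -
  interpret prob_space "symexp n"
    by (rule prob_space_symexp)
  define c where "c = 4 * (\<Sum>j<n. (u j)\<^sup>2)"
  define \<delta> where "\<delta> = exp (- ((\<Sum>j<n. \<bar>v j\<bar>) + c))"
  have "0 \<le> c"
    by (simp add: c_def sum_nonneg)
  let ?L = "{z \<in> space (symexp n). small_coord_mass n u z \<le> c}"
  have [measurable]: "?L \<in> sets (symexp n)"
    by measurable
  have integral_bound: "4 * (\<integral>\<^sup>+z. small_coord_mass n u z \<partial>symexp n) \<le> ennreal c"
    using mult_left_mono[OF nn_integral_small_coord_mass, of 4 n u]
    by (simp add: c_def ennreal_mult')
  have "prob (space (symexp n) - ?L)
      \<le> prob {z \<in> space (symexp n). ennreal 4 * (\<integral>\<^sup>+z. small_coord_mass n u z \<partial>symexp n) < small_coord_mass n u z}"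
    using integral_bound \<open>0 \<le> c\<close>
    by (intro finite_measure_mono) (auto simp: not_le intro!: order.strict_trans1[OF _ ennreal_lessI])
  also have "\<dots> \<le> 1/4"
    using integral_bound by (intro prob_gt_mult_nn_integral_le) (auto simp: top_unique)
  finally have "prob (space (symexp n) - ?L) \<le> 1/4" .
  moreover have "prob (K - ?L) \<le> prob (space (symexp n) - ?L)"
    using sets.sets_into_space[OF assms(1)] by (intro finite_measure_mono) auto
  ultimately have K_L: "prob K - 1/4 \<le> prob (K \<inter> ?L)"
    using finite_measure_Diff'[of K ?L] assms(1) by simp
  have "ennreal \<delta> * emeasure (symexp n) (K \<inter> ?L)
      \<le> emeasure (symexp n) {z \<in> space (symexp n). (\<lambda>j\<in>{..<n}. z j - y j) \<in> K}"
    unfolding \<delta>_def using assms by (rule emeasure_symexp_shift_ge)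
  then have shifted: "\<delta> * prob (K \<inter> ?L) \<le> prob {z \<in> space (symexp n). (\<lambda>j\<in>{..<n}. z j - y j) \<in> K}"
    by (simp add: \<delta>_def emeasure_eq_measure flip: ennreal_mult)
  have "\<delta> * (prob K - 1/4) \<le> \<delta> * prob (K \<inter> ?L)"
    using K_L by (simp add: \<delta>_def)
  also note shifted
  finally show ?thesis
    by (simp add: \<delta>_def c_def)
qed

section \<open>The seminorm beta\<close>

definition sup_form :: "nat \<Rightarrow> nat \<Rightarrow> (nat \<Rightarrow> nat \<Rightarrow> nat \<Rightarrow> real) \<Rightarrow> (nat \<Rightarrow> real) set
    \<Rightarrow> (nat \<Rightarrow> real) \<Rightarrow> (nat \<Rightarrow> real) \<Rightarrow> ennreal" where
  "sup_form n m a T g x = (SUP t\<in>T. ennreal \<bar>\<Sum>i<n. \<Sum>j<n. \<Sum>k<m. a i j k * g i * x j * t k\<bar>)"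

lemma beta_eq_sup_form: "beta n m a T x = (\<integral>\<^sup>+g. sup_form n m a T g x \<partial>gauss n)"
  unfolding beta_def sup_form_def ..

lemma gauss_exp_sup_eq_sup_form:
  "gauss_exp_sup n m a T = (\<integral>\<^sup>+ge. sup_form n m a T (fst ge) (snd ge) \<partial>(gauss n \<Otimes>\<^sub>M symexp n))"
  unfolding gauss_exp_sup_def sup_form_def ..

text \<open>\<open>T\<close> may be uncountable; measurability of the suprema below comes from a countable dense subset.\<close>
lemma sup_form_countable:
  obtains D where "countable D" "D \<subseteq> T" "sup_form n m a T = sup_form n m a D"
proof -
  obtain D :: "(nat \<Rightarrow> real) set" where D: "countable D" "D \<subseteq> T" "T \<subseteq> closure D"
    by (rule separable)
  have "sup_form n m a T g x \<le> sup_form n m a D g x" for g x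
  proof (cases "sup_form n m a D g x")
    case (real r)
    let ?f = "\<lambda>t::nat \<Rightarrow> real. \<bar>\<Sum>i<n. \<Sum>j<n. \<Sum>k<m. a i j k * g i * x j * t k\<bar>"
    have "continuous_on UNIV ?f"
      by (intro continuous_intros continuous_on_product_coordinates)
    then have "closed {t. ?f t \<le> r}"
      by (intro closed_Collect_le continuous_intros) auto
    moreover have "D \<subseteq> {t. ?f t \<le> r}"
    proof
      fix t assume "t \<in> D"
      then have "ennreal (?f t) \<le> sup_form n m a D g x"
        unfolding sup_form_def by (rule SUP_upper)
      then show "t \<in> {t. ?f t \<le> r}"
        using real by simp
    qed
    ultimately have "T \<subseteq> {t. ?f t \<le> r}"
      using D(3) closure_minimal by blast
    then show ?thesis
      using real by (auto simp: sup_form_def SUP_le_iff)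
  qed simp
  moreover have "sup_form n m a D g x \<le> sup_form n m a T g x" for g x
    unfolding sup_form_def using D(2) by (rule SUP_subset_mono) simp
  ultimately have "sup_form n m a T = sup_form n m a D"
    by (intro ext antisym)
  with D show ?thesis
    using that by blast
qed

lemma measurable_sup_form_gauss_symexp[measurable]:
  "(\<lambda>(g, x). sup_form n m a T g x) \<in> borel_measurable (gauss n \<Otimes>\<^sub>M symexp n)"
proof -
  obtain D where [simp]: "countable D" and eq: "sup_form n m a T = sup_form n m a D"
    by (rule sup_form_countable)
  have "(\<lambda>(g, x). sup_form n m a D g x) \<in> borel_measurable (gauss n \<Otimes>\<^sub>M symexp n)"
    unfolding gauss_def symexp_def sup_form_def by measurable
  then show ?thesis
    unfolding eq .
qed

lemma measurable_sup_form_gauss[measurable]: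
  "(\<lambda>g. sup_form n m a T g x) \<in> borel_measurable (gauss n)"
proof -
  obtain D where [simp]: "countable D" and eq: "sup_form n m a T = sup_form n m a D"
    by (rule sup_form_countable)
  have "(\<lambda>g. sup_form n m a D g x) \<in> borel_measurable (gauss n)"
    unfolding gauss_def sup_form_def by measurable
  then show ?thesis
    unfolding eq .
qed

lemma prob_space_gauss: "prob_space (gauss n)"
  unfolding gauss_def by (rule prob_space_PiM) (simp add: prob_space_normal_density)

lemma borel_measurable_beta[measurable]: "beta n m a T \<in> borel_measurable (symexp n)"
proof -
  interpret sigma_finite_measure "gauss n"
    using prob_space_gauss by (rule prob_space_imp_sigma_finite)
  have "(\<lambda>(x, g). sup_form n m a T g x) \<in> borel_measurable (symexp n \<Otimes>\<^sub>M gauss n)"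
    using measurable_pair_swap[OF measurable_sup_form_gauss_symexp] by simp
  then show ?thesis
    unfolding beta_eq_sup_form[abs_def] by (rule borel_measurable_nn_integral)
qed

lemma gauss_exp_sup_eq_nn_integral_beta: "gauss_exp_sup n m a T = (\<integral>\<^sup>+x. beta n m a T x \<partial>symexp n)"
proof -
  interpret pair_sigma_finite "gauss n" "symexp n"
    by (intro pair_sigma_finite.intro prob_space_imp_sigma_finite prob_space_gauss prob_space_symexp)
  show ?thesis
    unfolding gauss_exp_sup_eq_sup_form beta_eq_sup_form
    using nn_integral_snd[OF measurable_sup_form_gauss_symexp] by (simp add: case_prod_beta')
qed

lemma gauss_exp_sup_le_sA: "gauss_exp_sup n m a T \<le> sA n m a T"
  unfolding sA_def gauss_exp_sup_eq_nn_integral_beta by simp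

lemma sup_form_add: "sup_form n m a T g (\<lambda>j. x j + y j) \<le> sup_form n m a T g x + sup_form n m a T g y"
  unfolding sup_form_def
proof (rule SUP_least)
  fix t assume "t \<in> T"
  let ?F = "\<lambda>x. \<Sum>i<n. \<Sum>j<n. \<Sum>k<m. a i j k * g i * x j * t k"
  have "?F (\<lambda>j. x j + y j) = ?F x + ?F y"
    by (simp add: algebra_simps sum.distrib)
  then have "ennreal \<bar>?F (\<lambda>j. x j + y j)\<bar> \<le> ennreal \<bar>?F x\<bar> + ennreal \<bar>?F y\<bar>"
    by (simp add: ennreal_leI abs_triangle_ineq flip: ennreal_plus)
  also have "\<dots> \<le> (SUP t\<in>T. ennreal \<bar>\<Sum>i<n. \<Sum>j<n. \<Sum>k<m. a i j k * g i * x j * t k\<bar>)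
                 + (SUP t\<in>T. ennreal \<bar>\<Sum>i<n. \<Sum>j<n. \<Sum>k<m. a i j k * g i * y j * t k\<bar>)"
    using \<open>t \<in> T\<close> by (intro add_mono SUP_upper)
  finally show "ennreal \<bar>?F (\<lambda>j. x j + y j)\<bar> \<le> \<dots>" .
qed

lemma sup_form_scale: "sup_form n m a T g (\<lambda>j. c * x j) = ennreal \<bar>c\<bar> * sup_form n m a T g x"
proof -
  have "(\<Sum>i<n. \<Sum>j<n. \<Sum>k<m. a i j k * g i * (c * x j) * t k)
      = c * (\<Sum>i<n. \<Sum>j<n. \<Sum>k<m. a i j k * g i * x j * t k)" for t
    by (simp add: sum_distrib_left algebra_simps)
  then show ?thesis
    unfolding sup_form_def by (simp add: abs_mult ennreal_mult SUP_mult_left_ennreal)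
qed

lemma beta_add: "beta n m a T (\<lambda>j. x j + y j) \<le> beta n m a T x + beta n m a T y"
proof -
  have "beta n m a T (\<lambda>j. x j + y j) \<le> (\<integral>\<^sup>+g. sup_form n m a T g x + sup_form n m a T g y \<partial>gauss n)"
    unfolding beta_eq_sup_form by (intro nn_integral_mono sup_form_add)
  also have "\<dots> = beta n m a T x + beta n m a T y"
    unfolding beta_eq_sup_form by (rule nn_integral_add) measurable
  finally show ?thesis .
qed

lemma beta_scale: "beta n m a T (\<lambda>j. c * x j) = ennreal \<bar>c\<bar> * beta n m a T x"
  unfolding beta_eq_sup_form sup_form_scale by (rule nn_integral_cmult) measurable

lemma beta_restrict: "beta n m a T (restrict x {..<n}) = beta n m a T x"
  unfolding beta_def by (intro nn_integral_cong SUP_cong arg_cong[where f=ennreal]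
      arg_cong[where f=abs] sum.cong refl) auto

lemma beta_zero: "beta n m a T (\<lambda>j. 0) = 0"
  using beta_scale[of n m a T 0 "\<lambda>j. 0"] by simp

lemma beta_uminus: "beta n m a T (\<lambda>j. - x j) = beta n m a T x"
  using beta_scale[of n m a T "-1" x] by simp

lemma beta_diff_commute: "beta n m a T (\<lambda>j. x j - y j) = beta n m a T (\<lambda>j. y j - x j)"
  using beta_uminus[of n m a T "\<lambda>j. y j - x j"] by simp

lemma beta_diff_triangle:
  "beta n m a T (\<lambda>j. x j - z j) \<le> beta n m a T (\<lambda>j. x j - y j) + beta n m a T (\<lambda>j. y j - z j)"
  using beta_add[of n m a T "\<lambda>j. x j - y j" "\<lambda>j. y j - z j"] by simp

section \<open>Covering numbers of KB\<close>

lemma KB_scaled_split: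
  assumes "x \<in> KB n p" "0 \<le> p"
  obtains u v where "\<And>j. c * x j = u j + v j" "(\<Sum>j<n. \<bar>v j\<bar>) \<le> \<bar>c\<bar> * sqrt p" "(\<Sum>j<n. (u j)\<^sup>2) \<le> c\<^sup>2"
proof -
  obtain y z where x: "x = (\<lambda>j. y j + sqrt p * z j)" and "y \<in> B2 n" "z \<in> B1 n"
    using assms(1) unfolding KB_def by blast
  then have y: "(\<Sum>j<n. (y j)\<^sup>2) \<le> 1" and z: "(\<Sum>j<n. \<bar>z j\<bar>) \<le> 1"
    unfolding B2_def B1_def by auto
  have "(\<Sum>j<n. \<bar>c * sqrt p * z j\<bar>) = \<bar>c\<bar> * sqrt p * (\<Sum>j<n. \<bar>z j\<bar>)"
    using assms(2) by (simp add: abs_mult sum_distrib_left)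
  also have "\<dots> \<le> \<bar>c\<bar> * sqrt p"
    using z assms(2) by (simp add: mult_left_le)
  finally have v: "(\<Sum>j<n. \<bar>c * sqrt p * z j\<bar>) \<le> \<bar>c\<bar> * sqrt p" .
  have u: "(\<Sum>j<n. (c * y j)\<^sup>2) \<le> c\<^sup>2"
    using y by (simp add: power_mult_distrib flip: sum_distrib_left) (simp add: mult_left_le)
  have "c * x j = c * y j + c * sqrt p * z j" for j
    unfolding x by (simp add: algebra_simps)
  then show ?thesis
    using v u by (rule that)
qed

lemma prob_beta_le_four_gauss_exp_sup:
  assumes "gauss_exp_sup n m a T \<noteq> \<infinity>"
  shows "3/4 \<le> measure (symexp n) {z \<in> space (symexp n). beta n m a T z \<le> 4 * gauss_exp_sup n m a T}"
proof -
  interpret prob_space "symexp n"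
    by (rule prob_space_symexp)
  let ?E = "gauss_exp_sup n m a T"
  have "prob {z \<in> space (symexp n). ennreal 4 * (\<integral>\<^sup>+x. beta n m a T x \<partial>symexp n) < beta n m a T z} \<le> 1/4"
    using assms by (intro prob_gt_mult_nn_integral_le) (auto simp: gauss_exp_sup_eq_nn_integral_beta)
  moreover have "{z \<in> space (symexp n). ennreal 4 * (\<integral>\<^sup>+x. beta n m a T x \<partial>symexp n) < beta n m a T z}
      = space (symexp n) - {z \<in> space (symexp n). beta n m a T z \<le> 4 * ?E}"
    by (auto simp: gauss_exp_sup_eq_nn_integral_beta not_le)
  ultimately show ?thesis
    by (simp add: prob_compl)
qed

lemma measure_beta_shift_ge:
  assumes "0 < p" "gauss_exp_sup n m a T \<noteq> \<infinity>" "x \<in> KB n p"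
  shows "exp (- (1040 * p)) / 2 \<le> measure (symexp n)
    {z \<in> space (symexp n). beta n m a T (\<lambda>j. z j - 16 * sqrt p * x j) \<le> 4 * gauss_exp_sup n m a T}"
proof -
  let ?K = "{z \<in> space (symexp n). beta n m a T z \<le> 4 * gauss_exp_sup n m a T}"
  obtain u v where split: "\<And>j. 16 * sqrt p * x j = u j + v j"
    and v0: "(\<Sum>j<n. \<bar>v j\<bar>) \<le> \<bar>16 * sqrt p\<bar> * sqrt p" and u0: "(\<Sum>j<n. (u j)\<^sup>2) \<le> (16 * sqrt p)\<^sup>2"
    using KB_scaled_split[OF assms(3) less_imp_le[OF assms(1)], where c="16 * sqrt p"] by blast
  have v: "(\<Sum>j<n. \<bar>v j\<bar>) \<le> 16 * p"
    using v0 assms(1) by (simp add: mult.assoc)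
  have u: "(\<Sum>j<n. (u j)\<^sup>2) \<le> 256 * p"
    using u0 assms(1) by (simp add: power_mult_distrib)
  have "?K \<in> sets (symexp n)"
    by measurable
  moreover have "(\<lambda>j\<in>{..<n}. - z j) \<in> ?K" if "z \<in> ?K" for z
    using that by (simp add: beta_restrict beta_uminus space_symexp)
  ultimately have "exp (- ((\<Sum>j<n. \<bar>v j\<bar>) + 4 * (\<Sum>j<n. (u j)\<^sup>2))) * (measure (symexp n) ?K - 1/4)
      \<le> measure (symexp n) {z \<in> space (symexp n). (\<lambda>j\<in>{..<n}. z j - 16 * sqrt p * x j) \<in> ?K}"
    using split by (rule measure_symexp_shift_ge)
  also have "{z \<in> space (symexp n). (\<lambda>j\<in>{..<n}. z j - 16 * sqrt p * x j) \<in> ?K}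
      = {z \<in> space (symexp n). beta n m a T (\<lambda>j. z j - 16 * sqrt p * x j) \<le> 4 * gauss_exp_sup n m a T}"
    by (auto simp: beta_restrict space_symexp)
  finally have shifted: "exp (- ((\<Sum>j<n. \<bar>v j\<bar>) + 4 * (\<Sum>j<n. (u j)\<^sup>2))) * (measure (symexp n) ?K - 1/4)
      \<le> measure (symexp n) {z \<in> space (symexp n). beta n m a T (\<lambda>j. z j - 16 * sqrt p * x j) \<le> 4 * gauss_exp_sup n m a T}" .
  have "(\<Sum>j<n. \<bar>v j\<bar>) + 4 * (\<Sum>j<n. (u j)\<^sup>2) \<le> 1040 * p"
    using u v by linarith
  then have "exp (- (1040 * p)) \<le> exp (- ((\<Sum>j<n. \<bar>v j\<bar>) + 4 * (\<Sum>j<n. (u j)\<^sup>2)))"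
    by simp
  moreover have "1/2 \<le> measure (symexp n) ?K - 1/4"
    using prob_beta_le_four_gauss_exp_sup[OF assms(2)] by simp
  ultimately have "exp (- (1040 * p)) * (1/2) \<le> exp (- ((\<Sum>j<n. \<bar>v j\<bar>) + 4 * (\<Sum>j<n. (u j)\<^sup>2))) * (measure (symexp n) ?K - 1/4)"
    by (rule mult_mono) simp_all
  with shifted show ?thesis
    by linarith
qed

lemma beta_shift_sets_disjoint:
  assumes "0 < p" and far: "ennreal (1 / (2 * sqrt p)) * gauss_exp_sup n m a T < beta n m a T (\<lambda>j. x j - x' j)"
  shows "{z. beta n m a T (\<lambda>j. z j - 16 * sqrt p * x j) \<le> 4 * gauss_exp_sup n m a T}
       \<inter> {z. beta n m a T (\<lambda>j. z j - 16 * sqrt p * x' j) \<le> 4 * gauss_exp_sup n m a T} = {}"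
proof (rule ccontr)
  let ?\<beta> = "beta n m a T" and ?E = "gauss_exp_sup n m a T" and ?s = "16 * sqrt p"
  assume "\<not> ?thesis"
  then obtain z where z: "?\<beta> (\<lambda>j. z j - ?s * x j) \<le> 4 * ?E" "?\<beta> (\<lambda>j. z j - ?s * x' j) \<le> 4 * ?E"
    by blast
  have "ennreal ?s * ?\<beta> (\<lambda>j. x j - x' j) = ?\<beta> (\<lambda>j. ?s * x j - ?s * x' j)"
    using beta_scale[of n m a T ?s "\<lambda>j. x j - x' j"] assms(1) by (simp add: algebra_simps)
  also have "\<dots> \<le> ?\<beta> (\<lambda>j. ?s * x j - z j) + ?\<beta> (\<lambda>j. z j - ?s * x' j)"
    by (rule beta_diff_triangle)
  also have "\<dots> \<le> 4 * ?E + 4 * ?E"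
    using z by (intro add_mono) (simp_all add: beta_diff_commute[of _ _ _ _ "\<lambda>j. ?s * x j"])
  also have "\<dots> = 8 * ?E"
    by (simp flip: distrib_right)
  finally have "ennreal (1 / ?s) * (ennreal ?s * ?\<beta> (\<lambda>j. x j - x' j)) \<le> ennreal (1 / ?s) * (8 * ?E)"
    by (intro mult_left_mono) simp_all
  moreover have "ennreal (1 / ?s) * (ennreal ?s * ?\<beta> (\<lambda>j. x j - x' j)) = ?\<beta> (\<lambda>j. x j - x' j)"
    using assms(1) by (simp add: mult.assoc[symmetric] flip: ennreal_mult)
  moreover have "ennreal (1 / ?s) * (8 * ?E) = ennreal (1 / (2 * sqrt p)) * ?E"
    using assms(1) by (simp add: mult.assoc[symmetric] flip: ennreal_mult ennreal_numeral)
  ultimately show False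
    using far by simp
qed

lemma card_beta_separated_le:
  assumes "0 < p" "gauss_exp_sup n m a T \<noteq> \<infinity>" "finite P" "P \<subseteq> KB n p"
    and "separated (\<lambda>x y. beta n m a T (\<lambda>j. x j - y j)) (ennreal (1 / (2 * sqrt p)) * gauss_exp_sup n m a T) P"
  shows "real (card P) \<le> 2 * exp (1040 * p)"
proof -
  interpret prob_space "symexp n"
    by (rule prob_space_symexp)
  define A where "A x = {z \<in> space (symexp n). beta n m a T (\<lambda>j. z j - 16 * sqrt p * x j) \<le> 4 * gauss_exp_sup n m a T}"
    for x
  have "disjoint_family_on A P"
    using beta_shift_sets_disjoint[OF assms(1)] assms(5)
    unfolding disjoint_family_on_def separated_def A_def by blast
  moreover have "A x \<in> events" for x
  proof -
    have "A x = {z \<in> space (symexp n). beta n m a T (\<lambda>j\<in>{..<n}. z j - 16 * sqrt p * x j) \<le> 4 * gauss_exp_sup n m a T}"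
      unfolding A_def by (simp add: beta_restrict)
    also have "\<dots> \<in> events"
      by measurable
    finally show ?thesis .
  qed
  ultimately have "real (card P) * (exp (- (1040 * p)) / 2) \<le> 1"
    using assms measure_beta_shift_ge unfolding A_def
    by (intro card_mult_le_one_of_disjoint_events) auto
  then show ?thesis
    by (simp add: exp_minus field_simps)
qed

lemma KB_cover_beta:
  assumes "0 < p"
  shows "\<exists>N U. real N \<le> 2 * exp (1040 * p) \<and> KB n p = (\<Union>i\<in>{1..N}. U i) \<and>
    (\<forall>i\<in>{1..N}. (SUP x\<in>U i. SUP x'\<in>U i. beta n m a T (\<lambda>j. x j - x' j))
        \<le> ennreal (1 / sqrt p) * gauss_exp_sup n m a T)"
proof (cases "gauss_exp_sup n m a T = \<infinity>")
  case True
  show ?thesis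
  proof (intro exI[of _ 1] exI[of _ "\<lambda>_. KB n p"] conjI)
    have "1 \<le> exp (1040 * p)"
      using assms by simp
    then show "real 1 \<le> 2 * exp (1040 * p)"
      by linarith
  qed (use True assms in \<open>auto simp: ennreal_mult_eq_top_iff\<close>)
next
  case False
  let ?r = "ennreal (1 / (2 * sqrt p)) * gauss_exp_sup n m a T"
  have "2 * ?r = ennreal (1 / sqrt p) * gauss_exp_sup n m a T"
    using assms by (simp add: mult.assoc[symmetric] flip: ennreal_mult ennreal_numeral)
  moreover have "\<exists>N U. real N \<le> 2 * exp (1040 * p) \<and> KB n p = (\<Union>i\<in>{1..N}. U i) \<and>
      (\<forall>i\<in>{1..N}. \<forall>x\<in>U i. \<forall>x'\<in>U i. beta n m a T (\<lambda>j. x j - x' j) \<le> 2 * ?r)"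
    using beta_zero beta_diff_commute beta_diff_triangle card_beta_separated_le[OF assms False]
    by (intro cover_of_bounded_packing) auto
  ultimately show ?thesis
    by (metis (no_types, lifting) SUP_least)
qed

theorem lemma4p5:
  "\<exists>C::real. \<forall>(n::nat) (m::nat) (a::nat \<Rightarrow> nat \<Rightarrow> nat \<Rightarrow> real) (T::(nat \<Rightarrow> real) set) (p::real).
     T \<noteq> {} \<and> T \<subseteq> vecs m \<and> p \<ge> 1 \<longrightarrow>
     (\<exists>(N::nat) (U::nat \<Rightarrow> (nat \<Rightarrow> real) set).
        real N \<le> exp (C * p) \<and>
        KB n p = (\<Union>i\<in>{1..N}. U i) \<and>
        (\<forall>i\<in>{1..N}.
           (SUP x\<in>U i. SUP x'\<in>U i. beta n m a T (\<lambda>j. x j - x' j))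
             \<le> ennreal (1 / sqrt p) * gauss_exp_sup n m a T \<and>
           ennreal (1 / sqrt p) * gauss_exp_sup n m a T \<le> ennreal (1 / sqrt p) * sA n m a T))"
proof (rule exI[of _ 1041], intro allI impI, goal_cases)
  case (1 n m a T p)
  then have "1 \<le> p"
    by simp
  then obtain N U where "real N \<le> 2 * exp (1040 * p)" and "KB n p = (\<Union>i\<in>{1..N}. U i)"
    and "\<forall>i\<in>{1..N}. (SUP x\<in>U i. SUP x'\<in>U i. beta n m a T (\<lambda>j. x j - x' j))
        \<le> ennreal (1 / sqrt p) * gauss_exp_sup n m a T"
    using KB_cover_beta[of p n m a T] by auto
  moreover have "2 * exp (1040 * p) \<le> exp (1041 * p)"
    using two_exp_le_exp_add[OF \<open>1 \<le> p\<close>, of "1040 * p"] by simp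
  moreover have "ennreal (1 / sqrt p) * gauss_exp_sup n m a T \<le> ennreal (1 / sqrt p) * sA n m a T"
    by (intro mult_left_mono gauss_exp_sup_le_sA) simp
  ultimately show ?case
    by (meson order_trans)
qed

end
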